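(* Let $\varphi:\mathbb{R}\to\overline{\mathbb{R}}$ be proper, lsc and convex. Then there exist a proper, lsc, convex, nondecreasing function $\varphi^\uparrow$ and a proper, lsc, convex, nonincreasing function $\varphi^\downarrow$ such that $\varphi=\varphi^\uparrow+\varphi^\downarrow$. In addition, if $\operatorname{int}(\operatorname{dom}\varphi)\neq\emptyset$, then $\partial\varphi(z)=\partial\varphi^\uparrow(z)+\partial\varphi^\downarrow(z)$ for every $z\in\operatorname{dom}\varphi$.
   Context: $\partial$ denotes the convex subdifferential; $\overline{\mathbb{R}}=\mathbb{R}\cup\{\pm\infty\}$. *)

theory Defs
  imports "HOL-Analysis.Analysis" "HOL-Library.Extended_Real"
begin

definition proper_fun :: "(real \<Rightarrow> ereal) \<Rightarrow> bool" where
  "proper_fun f \<longleftrightarrow> (\<forall>x. f x \<noteq> -\<infinity>) \<and> (\<exists>x. f x \<noteq> \<infinity>)"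

definition lsc_fun :: "(real \<Rightarrow> ereal) \<Rightarrow> bool" where
  "lsc_fun f \<longleftrightarrow> (\<forall>x. f x \<le> Liminf (at x) f)"

definition epigraph :: "(real \<Rightarrow> ereal) \<Rightarrow> (real \<times> real) set" where
  "epigraph f = {(x, r). f x \<le> ereal r}"

definition convex_fun :: "(real \<Rightarrow> ereal) \<Rightarrow> bool" where
  "convex_fun f \<longleftrightarrow> convex (epigraph f)"

definition edom :: "(real \<Rightarrow> ereal) \<Rightarrow> real set" where
  "edom f = {x. f x < \<infinity>}"

definition subdiff :: "(real \<Rightarrow> ereal) \<Rightarrow> real \<Rightarrow> real set" where
  "subdiff f z = {v. \<bar>f z\<bar> \<noteq> \<infinity> \<and> (\<forall>x. f z + ereal (v * (x - z)) \<le> f x)}"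

definition set_plus_real :: "real set \<Rightarrow> real set \<Rightarrow> real set" where
  "set_plus_real A B = {a + b | a b. a \<in> A \<and> b \<in> B}"

end

(* If \<phi> is neither nondecreasing nor nonincreasing, there are a < b with \<phi> b < \<phi> a and
   p < q with \<phi> p < \<phi> q; convexity then gives \<phi> \<ge> \<phi> a left of a and \<phi> \<ge> \<phi> q right
   of q, so by lower semicontinuity \<phi> attains its minimum at some c. Since \<phi> is
   nonincreasing on (-\<infinity>, c] and nondecreasing on [c, \<infinity>), the functions
   \<phi>u x = \<phi> (max x c) - \<phi> c and \<phi>d x = \<phi> (min x c) are proper, lsc, convex, monotone,
   and add up to \<phi>. In the monotone cases one part is \<phi> and the other is 0.

   A subgradient v of \<phi> at z satisfies v (c - z) \<le> 0, so its affine minorant is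
   nondecreasing if z \<ge> c and nonincreasing if z \<le> c; composed with max or min it
   minorizes \<phi>u resp. \<phi>d, while the other part is minimal at z and has subgradient 0.
   Hence the sum rule holds at every point, without the hypothesis on the interior of
   the domain. *)
theory Submission
  imports Defs
begin

lemma lsc_fun_iff_open_superlevel: "lsc_fun f \<longleftrightarrow> (\<forall>y. open {x. y < f x})"
proof
  assume lsc: "lsc_fun f"
  show "\<forall>y. open {x. y < f x}"
  proof (intro allI Topological_Spaces.openI)
    fix y x assume "x \<in> {x. y < f x}"
    then have "y < f x" by simp
    with lsc have "eventually (\<lambda>z. y < f z) (at x)"
      unfolding lsc_fun_def le_Liminf_iff by blast
    then obtain S where "open S" "x \<in> S" "\<forall>z\<in>S. z \<noteq> x \<longrightarrow> y < f z"
      by (auto simp: eventually_at_topological)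
    with \<open>y < f x\<close> show "\<exists>T. open T \<and> x \<in> T \<and> T \<subseteq> {x. y < f x}"
      by (intro exI[of _ S]) auto
  qed
next
  assume superlevel: "\<forall>y. open {x. y < f x}"
  show "lsc_fun f"
    unfolding lsc_fun_def le_Liminf_iff
  proof (intro allI impI)
    fix x y assume "y < f x"
    with superlevel show "eventually (\<lambda>z. y < f z) (at x)"
      unfolding eventually_at_topological by (intro exI[of _ "{z. y < f z}"]) auto
  qed
qed

lemma lsc_fun_closed_sublevel: "lsc_fun f \<Longrightarrow> closed {x. f x \<le> t}"
  by (simp add: lsc_fun_iff_open_superlevel closed_def Collect_neg_eq [symmetric] not_le)

lemma lsc_fun_attains_min:
  assumes "lsc_fun f" "compact K" "K \<noteq> {}"
  shows "\<exists>x\<in>K. \<forall>y\<in>K. f x \<le> f y"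
proof -
  let ?F = "(\<lambda>w. {x. f x \<le> f w}) ` K"
  have "K \<inter> \<Inter>?F \<noteq> {}"
  proof (rule compact_imp_fip[OF \<open>compact K\<close>])
    show "closed T" if "T \<in> ?F" for T
      using that lsc_fun_closed_sublevel[OF \<open>lsc_fun f\<close>] by auto
  next
    fix F' assume "finite F'" "F' \<subseteq> ?F"
    then obtain W where W: "W \<subseteq> K" "finite W" "F' = (\<lambda>w. {x. f x \<le> f w}) ` W"
      by (meson finite_subset_image)
    show "K \<inter> \<Inter>F' \<noteq> {}"
    proof (cases "W = {}")
      case True
      then show ?thesis using W \<open>K \<noteq> {}\<close> by auto
    next
      case False
      then obtain w where "w \<in> W" "\<forall>w'\<in>W. f w \<le> f w'"
        using ex_min_if_finite[of "f ` W"] W(2) by (auto simp: not_less)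
      then show ?thesis using W by auto
    qed
  qed
  then show ?thesis by auto
qed

lemma lsc_fun_comp_continuous:
  assumes "lsc_fun f" "continuous_on UNIV g"
  shows "lsc_fun (\<lambda>x. f (g x))"
  unfolding lsc_fun_iff_open_superlevel
proof
  fix y
  have "open (g -` {x. y < f x})"
    using assms
    by (intro continuous_open_vimage) (auto simp: lsc_fun_iff_open_superlevel continuous_on_eq_continuous_at)
  then show "open {x. y < f (g x)}" by (simp add: vimage_def)
qed

lemma lsc_fun_minus_const: "lsc_fun f \<Longrightarrow> lsc_fun (\<lambda>x. f x - ereal k)"
  by (simp add: lsc_fun_iff_open_superlevel ereal_less_minus)

lemma lsc_fun_const: "lsc_fun (\<lambda>x. k)"
  by (simp add: lsc_fun_iff_open_superlevel Collect_const)

lemma convex_fun_sublevel: "convex_fun f \<Longrightarrow> convex {x. f x \<le> ereal M}"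
proof (rule convexI)
  fix x y u v :: real
  assume "convex_fun f" "x \<in> {x. f x \<le> ereal M}" "y \<in> {x. f x \<le> ereal M}"
    and uv: "0 \<le> u" "0 \<le> v" "u + v = 1"
  then have "u *\<^sub>R (x, M) + v *\<^sub>R (y, M) \<in> epigraph f"
    unfolding convex_fun_def by (intro convexD) (auto simp: epigraph_def)
  moreover have "u * M + v * M = M"
    using uv by (metis distrib_right mult_1)
  ultimately show "u *\<^sub>R x + v *\<^sub>R y \<in> {x. f x \<le> ereal M}"
    by (simp add: epigraph_def)
qed

lemma convex_fun_le_max:
  assumes "convex_fun f" "x \<le> y" "y \<le> z"
  shows "f y \<le> max (f x) (f z)"
proof (rule ereal_le_real)
  fix M assume "max (f x) (f z) \<le> ereal M"
  then have "x \<in> {x. f x \<le> ereal M}" "z \<in> {x. f x \<le> ereal M}" by simp_all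
  moreover have "is_interval {x. f x \<le> ereal M}"
    using convex_fun_sublevel[OF \<open>convex_fun f\<close>] by (simp only: is_interval_convex_1)
  ultimately have "y \<in> {x. f x \<le> ereal M}"
    using assms(2,3) unfolding is_interval_1 by blast
  then show "f y \<le> ereal M" by simp
qed

lemma convex_fun_mono_on_right_of_minimizer:
  assumes "convex_fun f" "\<forall>x. f c \<le> f x"
  shows "mono_on {c..} f"
proof (rule mono_onI)
  fix s t assume "s \<in> {c..}" "t \<in> {c..}" "s \<le> t"
  then have "f s \<le> max (f c) (f t)" using convex_fun_le_max[OF assms(1)] by simp
  then show "f s \<le> f t" using assms(2) by (simp add: max.absorb2)
qed

lemma convex_fun_antimono_on_left_of_minimizer:
  assumes "convex_fun f" "\<forall>x. f c \<le> f x"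
  shows "antimono_on {..c} f"
proof (rule monotone_onI)
  fix s t assume "s \<in> {..c}" "t \<in> {..c}" "s \<le> t"
  then have "f t \<le> max (f s) (f c)" using convex_fun_le_max[OF assms(1)] by simp
  then show "f t \<le> f s" using assms(2) by (simp add: max.absorb1)
qed

lemma convex_fun_comp_max:
  assumes "convex_fun f" "mono_on {c..} f"
  shows "convex_fun (\<lambda>x. f (max x c))"
  unfolding convex_fun_def
proof (rule convexI)
  fix p q :: "real \<times> real" and u v :: real
  assume p: "p \<in> epigraph (\<lambda>x. f (max x c))" and q: "q \<in> epigraph (\<lambda>x. f (max x c))"
    and uv: "0 \<le> u" "0 \<le> v" "u + v = 1"
  obtain x r y s where pq: "p = (x, r)" "q = (y, s)" by fastforce
  have "u *\<^sub>R (max x c, r) + v *\<^sub>R (max y c, s) \<in> epigraph f"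
    using assms(1) p q pq uv unfolding convex_fun_def by (intro convexD) (auto simp: epigraph_def)
  then have "f (u * max x c + v * max y c) \<le> ereal (u * r + v * s)"
    by (simp add: epigraph_def)
  moreover have "max (u * x + v * y) c \<le> u * max x c + v * max y c"
    and "c \<le> u * max x c + v * max y c"
  proof -
    have "u * x + v * y \<le> u * max x c + v * max y c" "u * c + v * c \<le> u * max x c + v * max y c"
      using uv by (intro add_mono mult_left_mono; simp)+
    moreover have "u * c + v * c = c" using uv by (metis distrib_right mult_1)
    ultimately show "max (u * x + v * y) c \<le> u * max x c + v * max y c"
      and "c \<le> u * max x c + v * max y c" by simp_all
  qed
  then have "f (max (u * x + v * y) c) \<le> f (u * max x c + v * max y c)"
    using assms(2) by (auto elim!: mono_onD)
  ultimately show "u *\<^sub>R p + v *\<^sub>R q \<in> epigraph (\<lambda>x. f (max x c))"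
    using pq by (auto simp: epigraph_def)
qed

lemma convex_fun_comp_min:
  assumes "convex_fun f" "antimono_on {..c} f"
  shows "convex_fun (\<lambda>x. f (min x c))"
  unfolding convex_fun_def
proof (rule convexI)
  fix p q :: "real \<times> real" and u v :: real
  assume p: "p \<in> epigraph (\<lambda>x. f (min x c))" and q: "q \<in> epigraph (\<lambda>x. f (min x c))"
    and uv: "0 \<le> u" "0 \<le> v" "u + v = 1"
  obtain x r y s where pq: "p = (x, r)" "q = (y, s)" by fastforce
  have "u *\<^sub>R (min x c, r) + v *\<^sub>R (min y c, s) \<in> epigraph f"
    using assms(1) p q pq uv unfolding convex_fun_def by (intro convexD) (auto simp: epigraph_def)
  then have "f (u * min x c + v * min y c) \<le> ereal (u * r + v * s)"
    by (simp add: epigraph_def)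
  moreover have "u * min x c + v * min y c \<le> min (u * x + v * y) c"
  proof -
    have "u * min x c + v * min y c \<le> u * x + v * y" "u * min x c + v * min y c \<le> u * c + v * c"
      using uv by (intro add_mono mult_left_mono; simp)+
    moreover have "u * c + v * c = c" using uv by (metis distrib_right mult_1)
    ultimately show ?thesis by simp
  qed
  then have "f (min (u * x + v * y) c) \<le> f (u * min x c + v * min y c)"
    using assms(2) by (auto elim!: monotone_onD)
  ultimately show "u *\<^sub>R p + v *\<^sub>R q \<in> epigraph (\<lambda>x. f (min x c))"
    using pq by (auto simp: epigraph_def)
qed

lemma epigraph_minus_const: "epigraph (\<lambda>x. f x - ereal k) = (+) (0, - k) ` epigraph f"
proof (intro equalityI subsetI)
  fix p assume "p \<in> epigraph (\<lambda>x. f x - ereal k)"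
  then obtain x r where "p = (0, - k) + (x, r + k)" "(x, r + k) \<in> epigraph f"
    by (cases p) (simp add: epigraph_def ereal_minus_le)
  then show "p \<in> (+) (0, - k) ` epigraph f" by blast
next
  fix p assume "p \<in> (+) (0, - k) ` epigraph f"
  then obtain x r where "p = (x, r - k)" "(x, r) \<in> epigraph f" by auto
  then show "p \<in> epigraph (\<lambda>x. f x - ereal k)"
    by (simp add: epigraph_def ereal_minus_le)
qed

lemma convex_fun_minus_const: "convex_fun f \<Longrightarrow> convex_fun (\<lambda>x. f x - ereal k)"
  by (simp add: convex_fun_def epigraph_minus_const convex_translation)

lemma convex_fun_zero: "convex_fun (\<lambda>x. 0)"
proof -
  have "epigraph (\<lambda>x. 0) = UNIV \<times> {0..}" by (auto simp: epigraph_def)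
  then show ?thesis by (simp add: convex_fun_def convex_Times)
qed

lemma convex_lsc_fun_minimizer_or_monotone:
  assumes "lsc_fun f" "convex_fun f"
  shows "(\<exists>c. \<forall>x. f c \<le> f x) \<or> mono f \<or> antimono f"
proof (rule ccontr)
  assume contra: "\<not> ?thesis"
  then obtain a b where ab: "a < b" "f b < f a"
    unfolding mono_def by (auto simp: not_le order.order_iff_strict)
  from contra obtain p q where pq: "p < q" "f p < f q"
    unfolding antimono_def by (auto simp: not_le order.order_iff_strict)
  have left: "f a \<le> f z" if "z \<le> a" for z
    using convex_fun_le_max[OF assms(2) that less_imp_le[OF ab(1)]] ab(2) by (auto simp: le_max_iff_disj)
  have right: "f q \<le> f z" if "q \<le> z" for z
    using convex_fun_le_max[OF assms(2) less_imp_le[OF pq(1)] that] pq(2) by (auto simp: le_max_iff_disj)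
  define K where "K = {min a p .. max b q}"
  have "a \<in> K" "q \<in> K" using ab pq by (auto simp: K_def)
  moreover have "compact K" by (simp add: K_def)
  ultimately obtain c where c: "\<forall>y\<in>K. f c \<le> f y"
    using lsc_fun_attains_min[OF assms(1), of K] by blast
  have "f c \<le> f z" for z
  proof (cases "z \<in> K")
    case True
    then show ?thesis using c by blast
  next
    case False
    then have "z \<le> a \<or> q \<le> z" by (auto simp: K_def)
    then show ?thesis
    proof
      assume "z \<le> a"
      have "f c \<le> f a" using c \<open>a \<in> K\<close> by blast
      also have "\<dots> \<le> f z" using left[OF \<open>z \<le> a\<close>] .
      finally show ?thesis .
    next
      assume "q \<le> z"
      have "f c \<le> f q" using c \<open>q \<in> K\<close> by blast
      also have "\<dots> \<le> f z" using right[OF \<open>q \<le> z\<close>] .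
      finally show ?thesis .
    qed
  qed
  with contra show False by blast
qed

lemma subdiff_add_subset:
  assumes "\<forall>x. f x = g x + h x"
  shows "set_plus_real (subdiff g z) (subdiff h z) \<subseteq> subdiff f z"
proof
  fix w assume "w \<in> set_plus_real (subdiff g z) (subdiff h z)"
  then obtain a b where w: "w = a + b" and a: "a \<in> subdiff g z" and b: "b \<in> subdiff h z"
    by (auto simp: set_plus_real_def)
  obtain gz hz where gh: "g z = ereal gz" "h z = ereal hz"
    using a b by (cases "g z"; cases "h z") (auto simp: subdiff_def)
  have "f z + ereal (w * (x - z)) \<le> f x" for x
  proof -
    have "f z + ereal (w * (x - z)) = ereal (gz + a * (x - z)) + ereal (hz + b * (x - z))"
      using assms gh w by (simp add: algebra_simps)
    also have "\<dots> \<le> g x + h x"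
      using a b gh by (intro add_mono) (auto simp: subdiff_def)
    finally show ?thesis using assms by simp
  qed
  moreover have "\<bar>f z\<bar> \<noteq> \<infinity>" using assms gh by simp
  ultimately show "w \<in> subdiff f z" by (simp add: subdiff_def)
qed

lemma zero_in_subdiff_iff: "0 \<in> subdiff f z \<longleftrightarrow> \<bar>f z\<bar> \<noteq> \<infinity> \<and> (\<forall>x. f z \<le> f x)"
  by (simp add: subdiff_def zero_ereal_def [symmetric])

lemma subdiff_minus_const: "subdiff (\<lambda>x. f x - ereal k) z = subdiff f z"
proof -
  have "f z - ereal k + ereal d \<le> f x - ereal k \<longleftrightarrow> f z + ereal d \<le> f x"
    if "\<bar>f z\<bar> \<noteq> \<infinity>" for x d
    using that by (cases "f z"; cases "f x") auto
  moreover have "\<bar>f z - ereal k\<bar> \<noteq> \<infinity> \<longleftrightarrow> \<bar>f z\<bar> \<noteq> \<infinity>"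
    by (cases "f z") auto
  ultimately show ?thesis
    unfolding subdiff_def by (intro Collect_cong conj_cong) auto
qed

lemma subdiff_const_zero: "subdiff (\<lambda>x. 0) z = {0}"
proof -
  have "v = 0" if "\<forall>x. ereal (v * (x - z)) \<le> 0" for v
    using that[rule_format, of "z + 1"] that[rule_format, of "z - 1"] by simp
  then show ?thesis by (auto simp: subdiff_def)
qed

lemma set_plus_real_zero_right [simp]: "set_plus_real A {0} = A"
  by (auto simp: set_plus_real_def)

lemma set_plus_real_zero_left [simp]: "set_plus_real {0} A = A"
  by (auto simp: set_plus_real_def)

lemma subdiff_minimizer_sign:
  assumes "v \<in> subdiff f z" "\<forall>x. f c \<le> f x"
  shows "v * (c - z) \<le> 0"
proof -
  obtain fz where fz: "f z = ereal fz" using assms(1) by (cases "f z") (auto simp: subdiff_def)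
  have "ereal (fz + v * (c - z)) \<le> f c" using assms(1) fz by (simp add: subdiff_def)
  also have "\<dots> \<le> ereal fz" using assms(2) fz by metis
  finally show ?thesis by simp
qed

lemma subdiff_comp_max:
  assumes "v \<in> subdiff f z" "0 \<le> v" "c \<le> z"
  shows "v \<in> subdiff (\<lambda>x. f (max x c)) z"
proof -
  have "f z + ereal (v * (x - z)) \<le> f (max x c)" for x
  proof -
    have "v * (x - z) \<le> v * (max x c - z)" using assms(2) by (simp add: mult_left_mono)
    then have "f z + ereal (v * (x - z)) \<le> f z + ereal (v * (max x c - z))"
      by (simp add: add_left_mono)
    also have "\<dots> \<le> f (max x c)" using assms(1) by (simp add: subdiff_def)
    finally show ?thesis .
  qed
  then show ?thesis using assms(1,3) by (simp add: subdiff_def max_absorb1)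
qed

lemma subdiff_comp_min:
  assumes "v \<in> subdiff f z" "v \<le> 0" "z \<le> c"
  shows "v \<in> subdiff (\<lambda>x. f (min x c)) z"
proof -
  have "f z + ereal (v * (x - z)) \<le> f (min x c)" for x
  proof -
    have "v * (x - z) \<le> v * (min x c - z)" using assms(2) by (simp add: mult_left_mono_neg)
    then have "f z + ereal (v * (x - z)) \<le> f z + ereal (v * (min x c - z))"
      by (simp add: add_left_mono)
    also have "\<dots> \<le> f (min x c)" using assms(1) by (simp add: subdiff_def)
    finally show ?thesis .
  qed
  then show ?thesis using assms(1,3) by (simp add: subdiff_def min_absorb1)
qed

lemma proper_fun_not_minf: "proper_fun f \<Longrightarrow> f x \<noteq> -\<infinity>"
  by (simp add: proper_fun_def)

definition nondecreasing_part :: "(real \<Rightarrow> ereal) \<Rightarrow> real \<Rightarrow> real \<Rightarrow> ereal" where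
  "nondecreasing_part f c x = f (max x c) - f c"

definition nonincreasing_part :: "(real \<Rightarrow> ereal) \<Rightarrow> real \<Rightarrow> real \<Rightarrow> ereal" where
  "nonincreasing_part f c x = f (min x c)"

context
  fixes f :: "real \<Rightarrow> ereal" and c :: real
  assumes proper: "proper_fun f" and minimizer: "\<forall>x. f c \<le> f x"
begin

lemma proper_fun_minimum_finite: "\<bar>f c\<bar> \<noteq> \<infinity>"
proof -
  obtain x where "f x \<noteq> \<infinity>" using proper by (auto simp: proper_fun_def)
  moreover have "f c \<le> f x" using minimizer by blast
  ultimately have "f c \<noteq> \<infinity>" by auto
  then show ?thesis using proper_fun_not_minf[OF proper, of c] by (cases "f c") auto
qed

lemma nondecreasing_part_altdef:
  "nondecreasing_part f c = (\<lambda>x. f (max x c) - ereal (real_of_ereal (f c)))"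
  using proper_fun_minimum_finite
  by (simp add: fun_eq_iff nondecreasing_part_def ereal_real')

lemma proper_nondecreasing_part: "proper_fun (nondecreasing_part f c)"
proof -
  have "nondecreasing_part f c x \<noteq> -\<infinity>" for x
    using proper_fun_not_minf[OF proper, of "max x c"]
    by (cases "f (max x c)") (auto simp: nondecreasing_part_altdef)
  moreover have "nondecreasing_part f c c \<noteq> \<infinity>"
    using proper_fun_minimum_finite by (cases "f c") (auto simp: nondecreasing_part_def)
  ultimately show ?thesis unfolding proper_fun_def by blast
qed

lemma proper_nonincreasing_part: "proper_fun (nonincreasing_part f c)"
proof -
  have "nonincreasing_part f c c \<noteq> \<infinity>"
    using proper_fun_minimum_finite by (cases "f c") (auto simp: nonincreasing_part_def)
  then show ?thesis using proper_fun_not_minf[OF proper] unfolding proper_fun_def nonincreasing_part_def by blast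
qed

lemma mono_nondecreasing_part:
  assumes convex: "convex_fun f"
  shows "mono (nondecreasing_part f c)"
proof (rule monoI)
  fix x y :: real assume "x \<le> y"
  then have "f (max x c) \<le> f (max y c)"
    using convex_fun_mono_on_right_of_minimizer[OF convex minimizer] by (auto elim!: mono_onD)
  then show "nondecreasing_part f c x \<le> nondecreasing_part f c y"
    by (simp add: nondecreasing_part_def ereal_minus_mono)
qed

lemma antimono_nonincreasing_part:
  assumes convex: "convex_fun f"
  shows "antimono (nonincreasing_part f c)"
proof (rule antimonoI)
  fix x y :: real assume "x \<le> y"
  then show "nonincreasing_part f c y \<le> nonincreasing_part f c x"
    using convex_fun_antimono_on_left_of_minimizer[OF convex minimizer]
    by (auto simp: nonincreasing_part_def elim!: monotone_onD)
qed

lemma convex_nondecreasing_part: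
  assumes convex: "convex_fun f"
  shows "convex_fun (nondecreasing_part f c)"
  unfolding nondecreasing_part_altdef
  using convex_fun_comp_max[OF convex convex_fun_mono_on_right_of_minimizer[OF convex minimizer]]
  by (rule convex_fun_minus_const)

lemma convex_nonincreasing_part:
  assumes convex: "convex_fun f"
  shows "convex_fun (nonincreasing_part f c)"
  unfolding nonincreasing_part_def
  using convex convex_fun_antimono_on_left_of_minimizer[OF convex minimizer]
  by (rule convex_fun_comp_min)

lemma lsc_nondecreasing_part: "lsc_fun f \<Longrightarrow> lsc_fun (nondecreasing_part f c)"
  unfolding nondecreasing_part_altdef
  by (rule lsc_fun_minus_const, erule lsc_fun_comp_continuous) (intro continuous_intros)

lemma lsc_nonincreasing_part: "lsc_fun f \<Longrightarrow> lsc_fun (nonincreasing_part f c)"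
  unfolding nonincreasing_part_def
  by (erule lsc_fun_comp_continuous) (intro continuous_intros)

lemma eq_nondecreasing_part_plus_nonincreasing_part:
  "f x = nondecreasing_part f c x + nonincreasing_part f c x"
proof (cases "x \<le> c")
  case True
  have "f c - f c = 0" using proper_fun_minimum_finite by (cases "f c") auto
  with True show ?thesis by (simp add: nondecreasing_part_def nonincreasing_part_def)
next
  case False
  have "f x = f x - f c + f c"
    using proper_fun_minimum_finite proper_fun_not_minf[OF proper, of x] by (cases "f x"; cases "f c") auto
  with False show ?thesis by (simp add: nondecreasing_part_def nonincreasing_part_def)
qed

lemma subdiff_nondecreasing_part: "subdiff (nondecreasing_part f c) z = subdiff (\<lambda>x. f (max x c)) z"
  by (simp add: nondecreasing_part_altdef subdiff_minus_const)

lemma subdiff_split_at_minimizer: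
  "subdiff f z = set_plus_real (subdiff (nondecreasing_part f c) z) (subdiff (nonincreasing_part f c) z)"
proof
  show "set_plus_real (subdiff (nondecreasing_part f c) z) (subdiff (nonincreasing_part f c) z)
      \<subseteq> subdiff f z"
    using eq_nondecreasing_part_plus_nonincreasing_part by (intro subdiff_add_subset) blast
next
  show "subdiff f z \<subseteq> set_plus_real (subdiff (nondecreasing_part f c) z) (subdiff (nonincreasing_part f c) z)"
  proof
    fix v assume v: "v \<in> subdiff f z"
    have "v * (c - z) \<le> 0" using subdiff_minimizer_sign[OF v minimizer] .
    then consider "c \<le> z" "0 \<le> v" | "z \<le> c" "v \<le> 0"
      by (cases "0 \<le> v") (auto simp: mult_le_0_iff)
    then show "v \<in> set_plus_real (subdiff (nondecreasing_part f c) z) (subdiff (nonincreasing_part f c) z)"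
    proof cases
      case 1
      have "v \<in> subdiff (nondecreasing_part f c) z"
        using subdiff_comp_max[OF v 1(2,1)] by (simp add: subdiff_nondecreasing_part)
      moreover have "0 \<in> subdiff (nonincreasing_part f c) z"
        using 1 minimizer proper_fun_minimum_finite by (simp add: zero_in_subdiff_iff nonincreasing_part_def min_absorb2)
      ultimately show ?thesis by (force simp: set_plus_real_def)
    next
      case 2
      have "0 \<in> subdiff (nondecreasing_part f c) z"
        using 2 minimizer proper_fun_minimum_finite by (simp add: subdiff_nondecreasing_part zero_in_subdiff_iff max_absorb2)
      moreover have "v \<in> subdiff (nonincreasing_part f c) z"
        using subdiff_comp_min[OF v 2(2,1)] by (simp add: nonincreasing_part_def [abs_def])
      ultimately show ?thesis by (force simp: set_plus_real_def)
    qed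
  qed
qed

end

theorem lemma3p1:
  fixes \<phi> :: "real \<Rightarrow> ereal"
  assumes "proper_fun \<phi>" and "lsc_fun \<phi>" and "convex_fun \<phi>"
  shows "\<exists>\<phi>u \<phi>d :: real \<Rightarrow> ereal.
           proper_fun \<phi>u \<and> lsc_fun \<phi>u \<and> convex_fun \<phi>u \<and> mono \<phi>u \<and>
           proper_fun \<phi>d \<and> lsc_fun \<phi>d \<and> convex_fun \<phi>d \<and> antimono \<phi>d \<and>
           (\<forall>x. \<phi> x = \<phi>u x + \<phi>d x) \<and>
           (interior (edom \<phi>) \<noteq> {} \<longrightarrow>
              (\<forall>z \<in> edom \<phi>. subdiff \<phi> z = set_plus_real (subdiff \<phi>u z) (subdiff \<phi>d z)))"
proof -
  have zero: "proper_fun (\<lambda>x. 0)" "lsc_fun (\<lambda>x. 0)" "convex_fun (\<lambda>x. 0)"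
    "mono (\<lambda>x::real. 0::ereal)" "antimono (\<lambda>x::real. 0::ereal)"
    by (simp_all add: proper_fun_def lsc_fun_const convex_fun_zero monoI antimonoI)
  consider (minimizer) c where "\<forall>x. \<phi> c \<le> \<phi> x" | (nondecreasing) "mono \<phi>" | (nonincreasing) "antimono \<phi>"
    using convex_lsc_fun_minimizer_or_monotone[OF assms(2,3)] by blast
  then show ?thesis
  proof cases
    case minimizer
    show ?thesis
      by (rule exI[of _ "nondecreasing_part \<phi> c"], rule exI[of _ "nonincreasing_part \<phi> c"])
        (use assms minimizer in \<open>auto simp: subdiff_split_at_minimizer[OF assms(1) minimizer]
          intro: proper_nondecreasing_part proper_nonincreasing_part
          lsc_nondecreasing_part lsc_nonincreasing_part convex_nondecreasing_part
          convex_nonincreasing_part mono_nondecreasing_part antimono_nonincreasing_part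
          eq_nondecreasing_part_plus_nonincreasing_part\<close>)
  next
    case nondecreasing
    show ?thesis
      by (intro exI[of _ \<phi>] exI[of _ "\<lambda>x. 0"]) (simp add: assms nondecreasing zero subdiff_const_zero)
  next
    case nonincreasing
    show ?thesis
      by (intro exI[of _ "\<lambda>x. 0"] exI[of _ \<phi>]) (simp add: assms nonincreasing zero subdiff_const_zero)
  qed
qed

end
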